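(* Let $G$ be a multiplicative monoid with identity, let $N$ be a $G$-graded near-ring and $P$ a graded ideal of $N$. If $P$ is a graded weakly prime ideal of $N$ and $(\{0\}:P)\subseteq P$, then $P$ is a graded prime ideal of $N$.
   Context: A near-ring $(N,+,\cdot)$ is a set with two binary operations such that $(N,+)$ is a group (not necessarily abelian), $(N,\cdot)$ is a semigroup, and $(a+b)y = ay+by$ for all $a,b,y\in N$. For a multiplicative monoid $G$ with identity, $N$ is a $G$-graded near-ring if there is a family $\{N_\sigma\}_{\sigma\in G}$ of additive normal subgroups of $N$ with $N=\bigoplus_{\sigma\in G}N_\sigma$ and $N_\sigma N_\tau\subseteq N_{\sigma\tau}$. An ideal $P$ is graded if $P=\bigoplus_{\sigma}(P\cap N_\sigma)$. For subsets $A,B$, $(A:B)=\{t\in N: tB\subseteq A\}$. For ideals $I,J$, $IJ$ denotes their product. A graded ideal $P$ is graded prime if for all graded ideals $I,J$ with $IJ\subseteq P$, either $I\subseteq P$ or $J\subseteq P$; graded weakly prime if the same holds whenever $\{0\}\neq IJ\subseteq P$. *)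

theory Defs
  imports Main
begin

text \<open>A (right) near-ring: (N,+) a group, not necessarily abelian (class group_add does not
  require commutativity), (N,*) a semigroup, and right distributivity (a+b)y = ay+by.
  The near-ring N is the whole type 'a.\<close>
class near_ring = group_add + semigroup_mult +
  assumes nr_distrib_right: "(a + b) * c = a * c + b * c"

definition add_subgroup :: "'a::group_add set \<Rightarrow> bool" where
  "add_subgroup H \<longleftrightarrow> 0 \<in> H \<and> (\<forall>x\<in>H. \<forall>y\<in>H. x + y \<in> H) \<and> (\<forall>x\<in>H. - x \<in> H)"

definition normal_add_subgroup :: "'a::group_add set \<Rightarrow> bool" where
  "normal_add_subgroup H \<longleftrightarrow> add_subgroup H \<and> (\<forall>x. \<forall>h\<in>H. x + h + - x \<in> H)"

definition add_gen :: "'a::group_add set \<Rightarrow> 'a set" where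
  "add_gen S = \<Inter>{H. add_subgroup H \<and> S \<subseteq> H}"

text \<open>N is G-graded: N is the internal direct sum of the additive normal subgroups Ns \<sigma>,
  and Ns \<sigma> Ns \<tau> \<subseteq> Ns (\<sigma>\<tau>). The monoid G is the whole type 'g.\<close>
definition graded_near_ring :: "('g::monoid_mult \<Rightarrow> 'a::near_ring set) \<Rightarrow> bool" where
  "graded_near_ring Ns \<longleftrightarrow>
     (\<forall>\<sigma>. normal_add_subgroup (Ns \<sigma>)) \<and>
     add_gen (\<Union>\<sigma>. Ns \<sigma>) = UNIV \<and>
     (\<forall>\<sigma>. Ns \<sigma> \<inter> add_gen (\<Union>\<tau>\<in>{\<tau>. \<tau> \<noteq> \<sigma>}. Ns \<tau>) = {0}) \<and>
     (\<forall>\<sigma> \<tau>. \<forall>x\<in>Ns \<sigma>. \<forall>y\<in>Ns \<tau>. x * y \<in> Ns (\<sigma> * \<tau>))"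

definition nr_ideal :: "'a::near_ring set \<Rightarrow> bool" where
  "nr_ideal I \<longleftrightarrow> normal_add_subgroup I \<and> (\<forall>i\<in>I. \<forall>n. i * n \<in> I) \<and>
     (\<forall>n n'. \<forall>i\<in>I. n * (n' + i) - n * n' \<in> I)"

text \<open>P = \<Oplus>\<sigma> (P \<inter> N\<sigma>) (directness is inherited from the grading of N).\<close>
definition graded_ideal :: "('g::monoid_mult \<Rightarrow> 'a::near_ring set) \<Rightarrow> 'a set \<Rightarrow> bool" where
  "graded_ideal Ns P \<longleftrightarrow> nr_ideal P \<and> P = add_gen (\<Union>\<sigma>. P \<inter> Ns \<sigma>)"

text \<open>Product of ideals: the set of products ij.\<close>
definition set_prod :: "'a::times set \<Rightarrow> 'a set \<Rightarrow> 'a set" where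
  "set_prod A B = {i * j | i j. i \<in> A \<and> j \<in> B}"

definition colon :: "'a::times set \<Rightarrow> 'a set \<Rightarrow> 'a set" where
  "colon A B = {t. \<forall>b\<in>B. t * b \<in> A}"

definition graded_prime :: "('g::monoid_mult \<Rightarrow> 'a::near_ring set) \<Rightarrow> 'a set \<Rightarrow> bool" where
  "graded_prime Ns P \<longleftrightarrow> graded_ideal Ns P \<and>
     (\<forall>I J. graded_ideal Ns I \<and> graded_ideal Ns J \<and> set_prod I J \<subseteq> P \<longrightarrow> I \<subseteq> P \<or> J \<subseteq> P)"

definition graded_weakly_prime :: "('g::monoid_mult \<Rightarrow> 'a::near_ring set) \<Rightarrow> 'a set \<Rightarrow> bool" where
  "graded_weakly_prime Ns P \<longleftrightarrow> graded_ideal Ns P \<and>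
     (\<forall>I J. graded_ideal Ns I \<and> graded_ideal Ns J \<and> set_prod I J \<noteq> {0} \<and> set_prod I J \<subseteq> P
        \<longrightarrow> I \<subseteq> P \<or> J \<subseteq> P)"

end

theory Submission
  imports Defs "HOL-Library.Set_Algebras"
begin

text \<open>Given graded ideals \<open>I\<close>, \<open>J\<close> with \<open>IJ \<subseteq> P\<close>, pass to the graded ideals \<open>I + P\<close> and
  \<open>J + P\<close>, whose product still lies in \<open>P\<close>. If that product is nonzero, weak primeness gives
  \<open>I + P \<subseteq> P\<close> or \<open>J + P \<subseteq> P\<close>. If it is zero, then in particular \<open>IP = 0\<close>, so
  \<open>I \<subseteq> (0 : P) \<subseteq> P\<close>.\<close>

lemma add_gen_least: "add_subgroup H \<Longrightarrow> S \<subseteq> H \<Longrightarrow> add_gen S \<subseteq> H"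
  unfolding add_gen_def by blast

lemma add_subgroup_add_gen: "add_subgroup (add_gen S)"
  unfolding add_gen_def add_subgroup_def by blast

lemma add_gen_mono: "S \<subseteq> T \<Longrightarrow> add_gen S \<subseteq> add_gen T"
  unfolding add_gen_def by blast

lemma
  assumes "normal_add_subgroup H"
  shows normal_add_subgroup_zero: "0 \<in> H"
    and normal_add_subgroup_add: "x \<in> H \<Longrightarrow> y \<in> H \<Longrightarrow> x + y \<in> H"
    and normal_add_subgroup_uminus: "x \<in> H \<Longrightarrow> - x \<in> H"
    and normal_add_subgroup_conj: "h \<in> H \<Longrightarrow> x + h + - x \<in> H"
  using assms unfolding normal_add_subgroup_def add_subgroup_def by blast+

lemma
  assumes "nr_ideal I"
  shows nr_ideal_normal: "normal_add_subgroup I"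
    and nr_ideal_mult_right: "i \<in> I \<Longrightarrow> i * n \<in> I"
    and nr_ideal_mult_left_diff: "i \<in> I \<Longrightarrow> n * (n' + i) - n * n' \<in> I"
  using assms unfolding nr_ideal_def by blast+

lemma set_plus_subset_left: "0 \<in> B \<Longrightarrow> A \<subseteq> A + (B :: 'a::monoid_add set)"
  by (metis add_0_right set_plus_intro subsetI)

lemma set_plus_subset_right: "0 \<in> A \<Longrightarrow> B \<subseteq> A + (B :: 'a::monoid_add set)"
  by (metis add_0_left set_plus_intro subsetI)

lemma set_plus_swap_normal:
  fixes H K :: "'a::group_add set"
  assumes "normal_add_subgroup K"
  shows "H + K \<subseteq> K + H"
proof
  fix x assume "x \<in> H + K"
  then obtain h k where "x = h + k" "h \<in> H" "k \<in> K" by (rule set_plus_elim)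
  then have "(h + k + - h) + h \<in> K + H"
    using normal_add_subgroup_conj[OF assms] by (intro set_plus_intro)
  then show "x \<in> K + H"
    by (simp add: \<open>x = h + k\<close> add.assoc)
qed

lemma normal_add_subgroup_set_plus:
  fixes H K :: "'a::group_add set"
  assumes H: "normal_add_subgroup H" and K: "normal_add_subgroup K"
  shows "normal_add_subgroup (H + K)"
  unfolding normal_add_subgroup_def add_subgroup_def
proof (intro conjI ballI allI)
  show "0 \<in> H + K"
    using set_plus_intro[OF normal_add_subgroup_zero[OF H] normal_add_subgroup_zero[OF K]] by simp
next
  fix x y assume "x \<in> H + K" "y \<in> H + K"
  then obtain a b c d where xy: "x = a + b" "y = c + d" "a \<in> H" "b \<in> K" "c \<in> H" "d \<in> K"
    by (metis set_plus_elim)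
  have "x + y = (a + (b + c + - b)) + (b + d)"
    using xy by (simp add: add.assoc diff_conv_add_uminus del: add_uminus_conv_diff)
  moreover have "a + (b + c + - b) \<in> H"
    using xy normal_add_subgroup_add[OF H] normal_add_subgroup_conj[OF H] by blast
  moreover have "b + d \<in> K"
    using xy by (simp add: K normal_add_subgroup_add)
  ultimately show "x + y \<in> H + K" by (metis set_plus_intro)
next
  fix x assume "x \<in> H + K"
  then obtain a b where x: "x = a + b" "a \<in> H" "b \<in> K" by (rule set_plus_elim)
  have "- x = (- b + - a + - (- b)) + - b"
    using x by (simp add: add.assoc minus_add diff_conv_add_uminus del: add_uminus_conv_diff)
  moreover have "- b + - a + - (- b) \<in> H"
    using x normal_add_subgroup_uminus[OF H] normal_add_subgroup_conj[OF H] by blast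
  moreover have "- b \<in> K"
    using x by (simp add: K normal_add_subgroup_uminus)
  ultimately show "- x \<in> H + K" by (metis set_plus_intro)
next
  fix x h assume "h \<in> H + K"
  then obtain a b where h: "h = a + b" "a \<in> H" "b \<in> K" by (rule set_plus_elim)
  have "x + h + - x = (x + a + - x) + (x + b + - x)"
    using h by (simp add: add.assoc diff_conv_add_uminus del: add_uminus_conv_diff)
  moreover have "x + a + - x \<in> H" "x + b + - x \<in> K"
    using h normal_add_subgroup_conj[OF H] normal_add_subgroup_conj[OF K] by blast+
  ultimately show "x + h + - x \<in> H + K" by (metis set_plus_intro)
qed

lemma nr_ideal_set_plus:
  fixes I P :: "'a::near_ring set"
  assumes I: "nr_ideal I" and P: "nr_ideal P"
  shows "nr_ideal (I + P)"
  unfolding nr_ideal_def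
proof (intro conjI allI ballI)
  show "normal_add_subgroup (I + P)"
    by (simp add: I P nr_ideal_normal normal_add_subgroup_set_plus)
next
  fix h n assume "h \<in> I + P"
  then obtain a b where h: "h = a + b" "a \<in> I" "b \<in> P" by (rule set_plus_elim)
  then have "h * n = a * n + b * n" and "a * n \<in> I" and "b * n \<in> P"
    by (simp_all add: nr_distrib_right I P nr_ideal_mult_right)
  then show "h * n \<in> I + P" by auto
next
  fix n n' h assume "h \<in> I + P"
  then obtain a b where h: "h = a + b" "a \<in> I" "b \<in> P" by (rule set_plus_elim)
  have "n * (n' + h) - n * n' = (n * ((n' + a) + b) - n * (n' + a)) + (n * (n' + a) - n * n')"
    by (simp add: h(1) add.assoc diff_conv_add_uminus del: add_uminus_conv_diff)
  moreover have "n * ((n' + a) + b) - n * (n' + a) \<in> P" "n * (n' + a) - n * n' \<in> I"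
    using h by (simp_all add: I P nr_ideal_mult_left_diff)
  ultimately have "n * (n' + h) - n * n' \<in> P + I" by auto
  then show "n * (n' + h) - n * n' \<in> I + P"
    using set_plus_swap_normal[OF nr_ideal_normal[OF I]] by blast
qed

lemma graded_ideal_set_plus:
  fixes I P :: "'a::near_ring set" and Ns :: "'g::monoid_mult \<Rightarrow> 'a set"
  assumes I: "graded_ideal Ns I" and P: "graded_ideal Ns P"
  shows "graded_ideal Ns (I + P)"
proof -
  have ideals: "nr_ideal I" "nr_ideal P" "nr_ideal (I + P)"
    using I P nr_ideal_set_plus unfolding graded_ideal_def by blast+
  then have zeros: "0 \<in> I" "0 \<in> P"
    by (simp_all add: nr_ideal_normal normal_add_subgroup_zero)
  let ?G = "add_gen (\<Union>\<sigma>. (I + P) \<inter> Ns \<sigma>)"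
  have "I = add_gen (\<Union>\<sigma>. I \<inter> Ns \<sigma>)" "P = add_gen (\<Union>\<sigma>. P \<inter> Ns \<sigma>)"
    using I P unfolding graded_ideal_def by blast+
  moreover have "I \<subseteq> I + P" "P \<subseteq> I + P"
    using zeros by (simp_all add: set_plus_subset_left set_plus_subset_right)
  ultimately have "I \<subseteq> ?G" "P \<subseteq> ?G"
    by (metis Int_mono UN_mono add_gen_mono order_refl)+
  moreover have "add_subgroup ?G" by (rule add_subgroup_add_gen)
  ultimately have "I + P \<subseteq> ?G"
    unfolding add_subgroup_def by (blast elim: set_plus_elim)
  moreover have "?G \<subseteq> I + P"
    using ideals(3) by (intro add_gen_least) (auto simp: nr_ideal_def normal_add_subgroup_def)
  ultimately show ?thesis
    using ideals(3) unfolding graded_ideal_def by blast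
qed

lemma set_prod_mono: "A \<subseteq> C \<Longrightarrow> B \<subseteq> D \<Longrightarrow> set_prod A B \<subseteq> set_prod C D"
  unfolding set_prod_def by blast

lemma subset_colon_iff: "I \<subseteq> colon A B \<longleftrightarrow> set_prod I B \<subseteq> A"
  unfolding colon_def set_prod_def by blast

lemma set_prod_set_plus_subset:
  fixes I J P :: "'a::near_ring set"
  assumes P: "nr_ideal P" and IJ: "set_prod I J \<subseteq> P"
  shows "set_prod (I + P) (J + P) \<subseteq> P"
proof
  fix x assume "x \<in> set_prod (I + P) (J + P)"
  then obtain a b c d where x: "x = (a + b) * (c + d)" "a \<in> I" "b \<in> P" "c \<in> J" "d \<in> P"
    unfolding set_prod_def by (blast elim: set_plus_elim)
  \<comment> \<open>Only right distributivity is available, so \<open>a (c + d)\<close> is compared with \<open>a c\<close>.\<close>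
  have "x = ((a * (c + d) - a * c) + a * c) + b * (c + d)"
    by (simp add: x(1) nr_distrib_right)
  moreover have "a * (c + d) - a * c \<in> P" "b * (c + d) \<in> P"
    using x by (simp_all add: P nr_ideal_mult_left_diff nr_ideal_mult_right)
  moreover have "a * c \<in> P"
    using x IJ unfolding set_prod_def by blast
  ultimately show "x \<in> P"
    by (metis P nr_ideal_normal normal_add_subgroup_add)
qed

theorem proposition1:
  fixes Ns :: "'g::monoid_mult \<Rightarrow> 'a::near_ring set" and P :: "'a set"
  assumes "graded_near_ring Ns"
    and "graded_ideal Ns P"
    and "graded_weakly_prime Ns P"
    and "colon {0} P \<subseteq> P"
  shows "graded_prime Ns P"
  unfolding graded_prime_def
proof (intro conjI allI impI assms(2), elim conjE)
  fix I J assume I: "graded_ideal Ns I" and J: "graded_ideal Ns J" and IJ: "set_prod I J \<subseteq> P"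
  have P: "nr_ideal P" and zeros: "0 \<in> P" "0 \<in> J"
    using assms(2) J by (simp_all add: graded_ideal_def nr_ideal_normal normal_add_subgroup_zero)
  have sums: "graded_ideal Ns (I + P)" "graded_ideal Ns (J + P)"
    using I J assms(2) by (simp_all add: graded_ideal_set_plus)
  have I_sub: "I \<subseteq> I + P" and J_sub: "J \<subseteq> J + P"
    using zeros by (simp_all add: set_plus_subset_left)
  show "I \<subseteq> P \<or> J \<subseteq> P"
  proof (cases "set_prod (I + P) (J + P) = {0}")
    case True
    have "set_prod I P \<subseteq> set_prod (I + P) (J + P)"
      using I_sub zeros by (intro set_prod_mono) (simp_all add: set_plus_subset_right)
    then have "I \<subseteq> colon {0} P"
      unfolding subset_colon_iff True .
    then show ?thesis using assms(4) by blast
  next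
    case False
    then have "I + P \<subseteq> P \<or> J + P \<subseteq> P"
      using assms(3) sums set_prod_set_plus_subset[OF P IJ] unfolding graded_weakly_prime_def by blast
    then show ?thesis using I_sub J_sub by blast
  qed
qed

end
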